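(* If $k\ge2$ is an integer, there is no $k$-tuple $(a_1,\dots,a_k)$ of real numbers satisfying $$0<a_i<|a_1+\cdots+a_{i-1}-(a_{i+1}+\cdots+a_k)|\quad\text{for all }1\le i\le k.$$
   Context: Empty sums are zero. *)

theory Defs
  imports Main Complex_Main
begin

end

theory Submission
  imports Defs
begin

(* Write P i for the sum of the a j with j < i and S for the total sum. The i-th condition reads
   a i < |2 P i + a i - S|, and it forces 2 P i < S to propagate to 2 P (i+1) = 2 (P i + a i) < S:
   the expression inside the absolute value cannot be nonnegative, since then a i < 2 P i + a i - S
   would give 2 P i > S. Starting from P 1 = 0 < S this yields 2 S = 2 P (k+1) < S, so S \<le> 0,
   which is impossible for positive a i. *)

lemma twice_prefix_below_total_step:
  fixes p x s :: real
  assumes "2 * p < s" and "x < \<bar>p - (s - p - x)\<bar>"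
  shows "2 * (p + x) < s"
  using assms by (auto simp: abs_if split: if_splits)

lemma suffix_sum_eq:
  fixes a :: "nat \<Rightarrow> 'a::ab_group_add"
  assumes "1 \<le> i" "i \<le> k"
  shows "(\<Sum>j\<in>{i<..k}. a j) = (\<Sum>j\<in>{1..k}. a j) - (\<Sum>j\<in>{1..<i}. a j) - a i"
proof -
  have split: "{1..k} = {1..<i} \<union> ({i} \<union> {i<..k})" using assms by auto
  have "(\<Sum>j\<in>{1..k}. a j) = (\<Sum>j\<in>{1..<i}. a j) + (a i + (\<Sum>j\<in>{i<..k}. a j))"
    unfolding split by (subst sum.union_disjoint) (auto simp: sum.union_disjoint)
  then show ?thesis by (simp add: algebra_simps)
qed

lemma sum_nonpos_if_terms_below_gaps:
  fixes a :: "nat \<Rightarrow> real"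
  assumes gap: "\<forall>i\<in>{1..k}. a i < \<bar>(\<Sum>j\<in>{1..<i}. a j) - (\<Sum>j\<in>{i<..k}. a j)\<bar>"
  shows "(\<Sum>j\<in>{1..k}. a j) \<le> 0"
proof (rule ccontr)
  define S where "S = (\<Sum>j\<in>{1..k}. a j)"
  assume "\<not> (\<Sum>j\<in>{1..k}. a j) \<le> 0"
  then have S_pos: "0 < S" by (simp add: S_def)
  have below_half: "2 * (\<Sum>j\<in>{1..<i}. a j) < S" if "1 \<le> i" "i \<le> Suc k" for i
    using that
  proof (induction i rule: dec_induct)
    case base
    show ?case using S_pos by simp
  next
    case (step i)
    then have "i \<le> k" by simp
    have "a i < \<bar>(\<Sum>j\<in>{1..<i}. a j) - (\<Sum>j\<in>{i<..k}. a j)\<bar>"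
      using gap \<open>1 \<le> i\<close> \<open>i \<le> k\<close> by simp
    then have "a i < \<bar>(\<Sum>j\<in>{1..<i}. a j) - (S - (\<Sum>j\<in>{1..<i}. a j) - a i)\<bar>"
      using suffix_sum_eq[OF \<open>1 \<le> i\<close> \<open>i \<le> k\<close>, of a] by (simp only: S_def)
    then have "2 * ((\<Sum>j\<in>{1..<i}. a j) + a i) < S"
      using step.IH \<open>i \<le> k\<close> by (intro twice_prefix_below_total_step) simp_all
    then show ?case using \<open>1 \<le> i\<close> by simp
  qed
  have "2 * S < S"
    using below_half[of "Suc k"] by (simp add: S_def atLeastLessThanSuc_atLeastAtMost)
  with S_pos show False by simp
qed

theorem mainTheorem7:
  fixes k :: nat
  assumes "k \<ge> 2"
  shows "\<not> (\<exists>a :: nat \<Rightarrow> real. \<forall>i\<in>{1..k}.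
            0 < a i \<and> a i < \<bar>(\<Sum>j\<in>{1..<i}. a j) - (\<Sum>j\<in>{i<..k}. a j)\<bar>)"
proof
  assume "\<exists>a :: nat \<Rightarrow> real. \<forall>i\<in>{1..k}.
            0 < a i \<and> a i < \<bar>(\<Sum>j\<in>{1..<i}. a j) - (\<Sum>j\<in>{i<..k}. a j)\<bar>"
  then obtain a :: "nat \<Rightarrow> real" where a: "\<forall>i\<in>{1..k}.
            0 < a i \<and> a i < \<bar>(\<Sum>j\<in>{1..<i}. a j) - (\<Sum>j\<in>{i<..k}. a j)\<bar>" by blast
  have "0 < (\<Sum>j\<in>{1..k}. a j)"
    using a assms by (intro sum_pos) auto
  moreover have "(\<Sum>j\<in>{1..k}. a j) \<le> 0"
    using a by (intro sum_nonpos_if_terms_below_gaps) blast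
  ultimately show False by simp
qed

end
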